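(* Let $K\ge1$, $N=2^K-1$ and $\mu>0$. For the $(N,K)$ binary simplex coded system with node service rate $\mu$, the maximum of $\lambda_1+\dots+\lambda_K$ over all vectors $(\lambda_1,\dots,\lambda_K)$ in its service capacity region equals $2^{K-1}\mu$.
   Context: Binary simplex coded system: $K$ files $f_1,\dots,f_K$ of equal size (elements of a vector space over a field of characteristic $2$) are stored on $N=2^K-1$ nodes indexed by the nonzero vectors $v\in\mathbb{F}_2^K$, node $v$ storing $\sum_{j=1}^K v_jf_j$. Each node has service rate $\mu$. Let $e_i$ be the $i$-th standard basis vector. The recovering sets of file $f_i$ are the systematic node $\{e_i\}$ and the $2^{K-1}-1$ disjoint repair groups $\{v,v+e_i\}$, $v\in\mathbb{F}_2^K\setminus\{0,e_i\}$ (each unordered pair counted once). Requests for $f_i$ arrive at rate $\lambda_i\ge0$. The service capacity region is the set of vectors $(\lambda_1,\dots,\lambda_K)$ for which there exist nonnegative rates assigned to the recovering sets of each $f_i$, summing to $\lambda_i$ for every $i$, such that for every node the total rate assigned to recovering sets containing that node is at most $\mu$. *)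

theory Defs
  imports Complex_Main
begin

text \<open>Vectors of F_2^K are encoded as subsets of {..<K} (support); addition is
  symmetric difference. Files/coordinates are indexed 0..K-1.\<close>

definition vadd :: "nat set \<Rightarrow> nat set \<Rightarrow> nat set" where
  "vadd u v = (u - v) \<union> (v - u)"

definition nodes :: "nat \<Rightarrow> nat set set" where
  "nodes K = {v. v \<subseteq> {..<K} \<and> v \<noteq> {}}"

definition unitvec :: "nat \<Rightarrow> nat set" where
  "unitvec i = {i}"

text \<open>Recovering sets of file i: the systematic node and the repair pairs
  {v, v + e_i} (unordered, hence counted once).\<close>
definition recsets :: "nat \<Rightarrow> nat \<Rightarrow> nat set set set" where
  "recsets K i = {{unitvec i}} \<union>
     {{v, vadd v (unitvec i)} | v. v \<in> nodes K \<and> v \<noteq> unitvec i}"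

definition capacity_region :: "nat \<Rightarrow> real \<Rightarrow> (nat \<Rightarrow> real) set" where
  "capacity_region K \<mu> = {lam. (\<forall>i<K. lam i \<ge> 0) \<and>
     (\<exists>x :: nat \<Rightarrow> nat set set \<Rightarrow> real.
        (\<forall>i<K. \<forall>R\<in>recsets K i. x i R \<ge> 0) \<and>
        (\<forall>i<K. (\<Sum>R\<in>recsets K i. x i R) = lam i) \<and>
        (\<forall>v\<in>nodes K. (\<Sum>i<K. \<Sum>R\<in>{R\<in>recsets K i. v \<in> R}. x i R) \<le> \<mu>))}"

end

theory Submission
  imports Defs
begin

text \<open>Every recovering set contains exactly one node of odd Hamming weight: the systematic
  node has weight one, and adding a unit vector flips the parity of the weight. Summing the
  load constraints over the 2^(K-1) odd-weight nodes therefore bounds the total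
  request rate by 2^(K-1) \<mu>. Conversely every node lies in exactly one recovering
  set of a single file, so serving only that file at rate \<mu> on each of its
  2^(K-1) recovering sets attains the bound.\<close>

definition odd_nodes :: "nat \<Rightarrow> nat set set" where
  "odd_nodes K = {v. v \<subseteq> {..<K} \<and> odd (card v)}"

lemma vadd_singleton: "vadd v {i} = (if i \<in> v then v - {i} else insert i v)"
  unfolding vadd_def by auto

lemma vadd_vadd_cancel: "vadd (vadd v w) w = v"
  unfolding vadd_def by auto

lemma odd_card_vadd_singleton_iff:
  assumes "finite v"
  shows "odd (card (vadd v {i})) \<longleftrightarrow> even (card v)"
proof (cases "i \<in> v")
  case True
  then have "card v = Suc (card (v - {i}))"
    using assms by (metis card_Suc_Diff1)
  then show ?thesis using True by (simp add: vadd_singleton)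
next
  case False
  then show ?thesis using assms by (simp add: vadd_singleton)
qed

lemma finite_nodes: "finite (nodes K)"
  by (rule finite_subset[of _ "Pow {..<K}"]) (auto simp: nodes_def)

lemma finite_recsets: "finite (recsets K i)"
  by (rule finite_subset[of _ "Pow (Pow (insert i {..<K}))"])
    (auto simp: recsets_def unitvec_def nodes_def vadd_def)

lemma odd_nodes_subset_nodes: "odd_nodes K \<subseteq> nodes K"
  unfolding odd_nodes_def nodes_def by auto

lemma finite_odd_nodes: "finite (odd_nodes K)"
  using finite_subset[OF odd_nodes_subset_nodes finite_nodes] .

lemma vadd_singleton_in_nodes:
  assumes "v \<in> nodes K" "v \<noteq> {i}" "i < K"
  shows "vadd v {i} \<in> nodes K"
  using assms unfolding nodes_def vadd_singleton by auto

lemma recsetsE: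
  assumes "R \<in> recsets K i"
  obtains "R = {{i}}"
    | v where "R = {v, vadd v {i}}" "v \<in> nodes K" "v \<noteq> {i}"
  using assms unfolding recsets_def unitvec_def by auto

lemma card_odd_subsets:
  assumes "finite S" "S \<noteq> {}"
  shows "card {T. T \<subseteq> S \<and> odd (card T)} = 2 ^ (card S - 1)"
proof -
  have "card {T. T \<subseteq> S \<and> even (card T)} = card {T. T \<subseteq> S \<and> odd (card T)}"
    using card_subsupersets_even_odd[of S "{}"] assms by auto
  moreover have "card {T. T \<subseteq> S \<and> even (card T)} + card {T. T \<subseteq> S \<and> odd (card T)} = 2 ^ card S"
  proof -
    have "Pow S = {T. T \<subseteq> S \<and> even (card T)} \<union> {T. T \<subseteq> S \<and> odd (card T)}" by auto
    then have "card (Pow S) = card {T. T \<subseteq> S \<and> even (card T)} + card {T. T \<subseteq> S \<and> odd (card T)}"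
      using assms(1) by (simp add: card_Un_disjoint disjoint_iff)
    then show ?thesis
      using assms(1) by (simp add: card_Pow)
  qed
  moreover have "card S \<noteq> 0" using assms by simp
  ultimately show ?thesis by (cases "card S") auto
qed

lemma card_odd_nodes:
  assumes "K \<ge> 1"
  shows "card (odd_nodes K) = 2 ^ (K - 1)"
proof -
  have "{..<K} \<noteq> {}" using assms by (simp add: lessThan_empty_iff)
  then show ?thesis unfolding odd_nodes_def by (subst card_odd_subsets) auto
qed

lemma card_odd_nodes_in_recset:
  assumes "i < K" "R \<in> recsets K i"
  shows "card {v \<in> odd_nodes K. v \<in> R} = 1"
  using assms(2)
proof (cases rule: recsetsE)
  case 1
  then have "{v \<in> odd_nodes K. v \<in> R} = {{i}}"
    using assms(1) unfolding odd_nodes_def by auto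
  then show ?thesis by simp
next
  case (2 v)
  have "v \<subseteq> {..<K}" "vadd v {i} \<subseteq> {..<K}"
    using 2 vadd_singleton_in_nodes[OF _ _ assms(1)] unfolding nodes_def by auto
  moreover have "odd (card (vadd v {i})) \<longleftrightarrow> even (card v)"
    using 2(2) finite_subset[of v "{..<K}"] by (intro odd_card_vadd_singleton_iff) (auto simp: nodes_def)
  ultimately have "{u \<in> odd_nodes K. u \<in> R} = (if odd (card v) then {v} else {vadd v {i}})"
    unfolding 2(1) odd_nodes_def by auto
  then show ?thesis by simp
qed

lemma sum_recsets_eq_sum_odd_nodes:
  fixes x :: "nat set set \<Rightarrow> 'a::semiring_1"
  assumes "i < K"
  shows "(\<Sum>R\<in>recsets K i. x R) = (\<Sum>v\<in>odd_nodes K. \<Sum>R\<in>{R\<in>recsets K i. v \<in> R}. x R)"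
proof -
  have "(\<Sum>R\<in>recsets K i. x R) = (\<Sum>R\<in>recsets K i. \<Sum>v\<in>{v \<in> odd_nodes K. v \<in> R}. x R)"
    using card_odd_nodes_in_recset[OF assms] by simp
  also have "\<dots> = (\<Sum>v\<in>odd_nodes K. \<Sum>R\<in>{R\<in>recsets K i. v \<in> R}. x R)"
    by (rule sum.swap_restrict[OF finite_recsets finite_odd_nodes])
  finally show ?thesis .
qed

lemma card_recsets_containing_node:
  assumes "i < K" "v \<in> nodes K"
  shows "card {R \<in> recsets K i. v \<in> R} = 1"
proof -
  define P where "P = (if v = {i} then {{i}} else {v, vadd v {i}})"
  have "{R \<in> recsets K i. v \<in> R} = {P}"
  proof (intro equalityI subsetI)
    fix R assume "R \<in> {R \<in> recsets K i. v \<in> R}"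
    then have R: "R \<in> recsets K i" "v \<in> R" by auto
    from R(1) show "R \<in> {P}"
    proof (cases rule: recsetsE)
      case 1
      then show ?thesis using R(2) by (simp add: P_def)
    next
      case (2 w)
      have "vadd w {i} \<noteq> {i}"
        using 2(2) unfolding nodes_def vadd_singleton by auto
      then show ?thesis
        using R(2) 2 vadd_vadd_cancel[of w "{i}"] by (auto simp: P_def insert_commute)
    qed
  next
    fix R assume "R \<in> {P}"
    moreover have "P \<in> recsets K i"
      using assms unfolding P_def recsets_def unitvec_def by auto
    ultimately show "R \<in> {R \<in> recsets K i. v \<in> R}"
      unfolding P_def by auto
  qed
  then show ?thesis by simp
qed

lemma card_recsets:
  assumes "i < K"
  shows "card (recsets K i) = card (odd_nodes K)"
proof -
  have "card (recsets K i) = (\<Sum>v\<in>odd_nodes K. card {R \<in> recsets K i. v \<in> R})"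
    using sum_recsets_eq_sum_odd_nodes[OF assms, of "\<lambda>_. 1::nat"] by simp
  also have "\<dots> = (\<Sum>v\<in>odd_nodes K. 1)"
    using card_recsets_containing_node[OF assms] odd_nodes_subset_nodes
    by (intro sum.cong) auto
  finally show ?thesis by simp
qed

lemma single_file_in_capacity_region:
  fixes \<mu> :: real
  assumes "i < K" "\<mu> \<ge> 0"
  shows "(\<lambda>j. if j = i then \<mu> * real (card (recsets K i)) else 0) \<in> capacity_region K \<mu>"
proof -
  define x :: "nat \<Rightarrow> nat set set \<Rightarrow> real" where "x j R = (if j = i then \<mu> else 0)" for j R
  have "(\<Sum>j<K. \<Sum>R\<in>{R\<in>recsets K j. v \<in> R}. x j R) = \<mu>" if "v \<in> nodes K" for v
  proof -
    have "(\<Sum>j<K. \<Sum>R\<in>{R\<in>recsets K j. v \<in> R}. x j R)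
        = (\<Sum>j<K. if j = i then \<mu> * card {R\<in>recsets K i. v \<in> R} else 0)"
      by (rule sum.cong) (auto simp: x_def)
    also have "\<dots> = \<mu>"
      using assms(1) card_recsets_containing_node[OF assms(1) that] by simp
    finally show ?thesis .
  qed
  then show ?thesis
    unfolding capacity_region_def using assms(2)
    by (intro CollectI conjI exI[of _ x]) (auto simp: x_def)
qed

lemma sum_le_card_odd_nodes_mult:
  fixes lam :: "nat \<Rightarrow> real" and \<mu> :: real
  assumes "lam \<in> capacity_region K \<mu>"
  shows "(\<Sum>i<K. lam i) \<le> card (odd_nodes K) * \<mu>"
proof -
  obtain x :: "nat \<Rightarrow> nat set set \<Rightarrow> real" where
    rate: "\<And>i. i < K \<Longrightarrow> (\<Sum>R\<in>recsets K i. x i R) = lam i" and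
    load: "\<And>v. v \<in> nodes K \<Longrightarrow> (\<Sum>i<K. \<Sum>R\<in>{R\<in>recsets K i. v \<in> R}. x i R) \<le> \<mu>"
    using assms unfolding capacity_region_def by blast
  have "(\<Sum>i<K. lam i) = (\<Sum>i<K. \<Sum>v\<in>odd_nodes K. \<Sum>R\<in>{R\<in>recsets K i. v \<in> R}. x i R)"
    by (rule sum.cong) (simp_all flip: rate add: sum_recsets_eq_sum_odd_nodes)
  also have "\<dots> = (\<Sum>v\<in>odd_nodes K. \<Sum>i<K. \<Sum>R\<in>{R\<in>recsets K i. v \<in> R}. x i R)"
    by (rule sum.swap)
  also have "\<dots> \<le> (\<Sum>v\<in>odd_nodes K. \<mu>)"
    by (rule sum_mono) (use load odd_nodes_subset_nodes in blast)
  finally show ?thesis by simp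
qed

theorem lemma3:
  fixes K :: nat and \<mu> :: real
  assumes "K \<ge> 1" and "\<mu> > 0"
  shows "(\<exists>lam\<in>capacity_region K \<mu>. (\<Sum>i<K. lam i) = 2 ^ (K - 1) * \<mu>) \<and>
         (\<forall>lam\<in>capacity_region K \<mu>. (\<Sum>i<K. lam i) \<le> 2 ^ (K - 1) * \<mu>)"
proof
  let ?lam = "\<lambda>j. if j = 0 then \<mu> * real (card (recsets K 0)) else 0"
  have "?lam \<in> capacity_region K \<mu>"
    using single_file_in_capacity_region[of 0 K \<mu>] assms by simp
  moreover have "(\<Sum>i<K. ?lam i) = 2 ^ (K - 1) * \<mu>"
    using assms(1) card_recsets[of 0 K] card_odd_nodes[OF assms(1)] by simp
  ultimately show "\<exists>lam\<in>capacity_region K \<mu>. (\<Sum>i<K. lam i) = 2 ^ (K - 1) * \<mu>" by blast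
  show "\<forall>lam\<in>capacity_region K \<mu>. (\<Sum>i<K. lam i) \<le> 2 ^ (K - 1) * \<mu>"
    using sum_le_card_odd_nodes_mult[of _ K \<mu>] card_odd_nodes[OF assms(1)] by auto
qed

end
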